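(* Let $V$ be a finite set, let $d\ge 1$, let $R=(\le_1,\ldots,\le_d)$ be a $d$-representation on $V$, let $R'=(\le_1,\ldots,\le_{d-1})$, and let $\psi:\Sigma(R)\setminus\Sigma(R')\to V$ be defined by $\psi(F)=\min_{\le_d}\{x\in V : x<_i\max_{\le_i}F \ \forall i\in\{1,\ldots,d-1\}\}$. Let $A=\{F\in\Sigma(R)\setminus\Sigma(R') : \psi(F)\notin F\}$ and $B=\{F\in\Sigma(R)\setminus\Sigma(R') : \psi(F)\in F\}$. Then: (1) for every $F\in A$: $F\cup\{\psi(F)\}\in B$, $\psi(F\cup\{\psi(F)\})=\psi(F)$, and $f<_d\psi(F)$ for every $f\in F$ (i.e. $\max_{\le_d}F<_d\psi(F)$ when $F\neq\emptyset$); (2) for every $F\in B$: $F\setminus\{\psi(F)\}\in A$ and $\psi(F\setminus\{\psi(F)\})=\psi(F)$.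
   Context: A $k$-representation on $V$ is a family of $k$ linear orders on $V$. For a linear order $\le$ on $V$, $x\in V$ and $F\subseteq V$, $x$ dominates $F$ in $\le$ if $f\le x$ for all $f\in F$; $x$ dominates $F$ in a representation if it dominates $F$ in at least one of its orders. For a representation $S$ on $V$, the supremum section $\Sigma(S)$ is the set of subsets $F\subseteq V$ such that every $v\in V$ dominates $F$ in $S$. When $d=1$, $R'$ has no orders and the same definition applies. The set over which the minimum defining $\psi$ is taken is nonempty for every $F\in\Sigma(R)\setminus\Sigma(R')$. $<_i$ denotes the strict order associated with $\le_i$. *)

theory Defs
  imports Main
begin

text \<open>A linear order on V is a relation r with linear_order_on V r (from Main).
  A k-representation is a list of k such relations.\<close>

definition dominates_in :: "('a \<times> 'a) set \<Rightarrow> 'a \<Rightarrow> 'a set \<Rightarrow> bool" where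
  "dominates_in r x F \<longleftrightarrow> (\<forall>f\<in>F. (f, x) \<in> r)"

definition dominates_rep :: "('a \<times> 'a) set list \<Rightarrow> 'a \<Rightarrow> 'a set \<Rightarrow> bool" where
  "dominates_rep S x F \<longleftrightarrow> (\<exists>r\<in>set S. dominates_in r x F)"

definition supremum_section :: "'a set \<Rightarrow> ('a \<times> 'a) set list \<Rightarrow> 'a set set" where
  "supremum_section V S = {F. F \<subseteq> V \<and> (\<forall>v\<in>V. dominates_rep S v F)}"

definition strict_in :: "('a \<times> 'a) set \<Rightarrow> 'a \<Rightarrow> 'a \<Rightarrow> bool" where
  "strict_in r x y \<longleftrightarrow> (x, y) \<in> r \<and> x \<noteq> y"

definition max_in :: "('a \<times> 'a) set \<Rightarrow> 'a set \<Rightarrow> 'a" where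
  "max_in r F = (THE x. x \<in> F \<and> (\<forall>f\<in>F. (f, x) \<in> r))"

definition min_in :: "('a \<times> 'a) set \<Rightarrow> 'a set \<Rightarrow> 'a" where
  "min_in r F = (THE x. x \<in> F \<and> (\<forall>f\<in>F. (x, f) \<in> r))"

text \<open>psi for R = Rs (d = length Rs orders, indices 0..d-1; the last one is the d-th order).\<close>
definition psi :: "'a set \<Rightarrow> ('a \<times> 'a) set list \<Rightarrow> 'a set \<Rightarrow> 'a" where
  "psi V Rs F = min_in (Rs ! (length Rs - 1))
     {x \<in> V. \<forall>i < length Rs - 1. strict_in (Rs ! i) x (max_in (Rs ! i) F)}"

end

theory Submission
  imports Defs
begin

text \<open>
  Write \<open>S(F)\<close> for the set of vertices lying strictly below \<open>max\<^sub>i F\<close> in each of the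
  first \<open>d - 1\<close> orders, so that \<open>\<psi>(F) = min\<^sub>d S(F)\<close>. For nonempty \<open>F\<close>, a vertex fails to
  dominate \<open>F\<close> in \<open>\<le>\<^sub>i\<close> exactly when it lies strictly below \<open>max\<^sub>i F\<close>; hence \<open>S(F)\<close> is the set
  of vertices not dominating \<open>F\<close> in \<open>R'\<close>, it is nonempty iff \<open>F \<notin> \<Sigma>(R')\<close>, and for
  \<open>F \<in> \<Sigma>(R)\<close> all its elements dominate \<open>F\<close> in \<open>\<le>\<^sub>d\<close>. Since \<open>\<psi>(F)\<close> lies strictly below every
  \<open>max\<^sub>i F\<close>, adding or removing \<open>\<psi>(F)\<close> changes none of these maxima, hence neither \<open>S(F)\<close>
  nor \<open>\<psi>(F)\<close>. Adding \<open>\<psi>(F)\<close> keeps \<open>F\<close> in \<open>\<Sigma>(R)\<close>: a vertex in \<open>S(F)\<close> is above \<open>\<psi>(F)\<close> in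
  \<open>\<le>\<^sub>d\<close> by minimality, any other vertex dominates \<open>F\<close> in some \<open>\<le>\<^sub>i\<close> and is then above
  \<open>max\<^sub>i F\<close>, hence above \<open>\<psi>(F)\<close>.
\<close>

lemma linear_order_on_refl: "linear_order_on V r \<Longrightarrow> x \<in> V \<Longrightarrow> (x, x) \<in> r"
  by (auto simp: order_on_defs refl_on_def)

lemma linear_order_on_trans: "linear_order_on V r \<Longrightarrow> (x, y) \<in> r \<Longrightarrow> (y, z) \<in> r \<Longrightarrow> (x, z) \<in> r"
  by (auto simp: order_on_defs elim: transE)

lemma linear_order_on_antisym: "linear_order_on V r \<Longrightarrow> (x, y) \<in> r \<Longrightarrow> (y, x) \<in> r \<Longrightarrow> x = y"
  by (auto simp: order_on_defs antisym_def)

lemma linear_order_on_total: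
  "linear_order_on V r \<Longrightarrow> x \<in> V \<Longrightarrow> y \<in> V \<Longrightarrow> (x, y) \<in> r \<or> (y, x) \<in> r"
  by (cases "x = y") (auto simp: order_on_defs total_on_def refl_on_def)

lemma finite_linear_order_on_has_max:
  assumes "linear_order_on V r" "finite F" "F \<noteq> {}" "F \<subseteq> V"
  shows "\<exists>x\<in>F. \<forall>f\<in>F. (f, x) \<in> r"
  using assms(2-4)
proof (induction F rule: finite_ne_induct)
  case (singleton x)
  then show ?case using linear_order_on_refl[OF assms(1)] by auto
next
  case (insert x F)
  then obtain m where m: "m \<in> F" "\<forall>f\<in>F. (f, m) \<in> r" by auto
  consider "(m, x) \<in> r" | "(x, m) \<in> r"
    using linear_order_on_total[OF assms(1)] m(1) insert.prems by blast
  then show ?case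
  proof cases
    case 1
    then have "\<forall>f\<in>insert x F. (f, x) \<in> r"
      using m(2) insert.prems linear_order_on_trans[OF assms(1)] linear_order_on_refl[OF assms(1)]
      by blast
    then show ?thesis by blast
  next
    case 2
    then show ?thesis using m by blast
  qed
qed

lemma max_in_eqI: "linear_order_on V r \<Longrightarrow> x \<in> F \<Longrightarrow> \<forall>f\<in>F. (f, x) \<in> r \<Longrightarrow> max_in r F = x"
  unfolding max_in_def by (rule the_equality) (auto intro: linear_order_on_antisym)

lemma max_in_greatest:
  assumes "linear_order_on V r" "finite F" "F \<noteq> {}" "F \<subseteq> V"
  shows "max_in r F \<in> F" "\<forall>f\<in>F. (f, max_in r F) \<in> r"
  using finite_linear_order_on_has_max[OF assms] max_in_eqI[OF assms(1)] by metis+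

lemma min_in_eq_max_in_converse: "min_in r F = max_in (r\<inverse>) F"
  by (simp add: min_in_def max_in_def)

lemma min_in_least:
  assumes "linear_order_on V r" "finite F" "F \<noteq> {}" "F \<subseteq> V"
  shows "min_in r F \<in> F" "\<forall>f\<in>F. (min_in r F, f) \<in> r"
  using max_in_greatest[of V "r\<inverse>" F] assms by (simp_all add: min_in_eq_max_in_converse)

lemma not_dominates_in_iff_strict_in_max_in:
  assumes "linear_order_on V r" "finite F" "F \<noteq> {}" "F \<subseteq> V" "v \<in> V"
  shows "\<not> dominates_in r v F \<longleftrightarrow> strict_in r v (max_in r F)"
proof -
  note max = max_in_greatest[OF assms(1-4)]
  have "dominates_in r v F \<longleftrightarrow> (max_in r F, v) \<in> r"
    using max linear_order_on_trans[OF assms(1)] by (auto simp: dominates_in_def)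
  also have "\<dots> \<longleftrightarrow> \<not> strict_in r v (max_in r F)"
    using max(1) assms(4,5) linear_order_on_total[OF assms(1)] linear_order_on_refl[OF assms(1)]
      linear_order_on_antisym[OF assms(1)]
    by (auto simp: strict_in_def)
  finally show ?thesis by simp
qed

lemma dominates_rep_take_iff:
  "n \<le> length Rs \<Longrightarrow> dominates_rep (take n Rs) v F \<longleftrightarrow> (\<exists>i<n. dominates_in (Rs ! i) v F)"
  by (auto simp: dominates_rep_def set_conv_nth)

lemma dominates_rep_take_butlast:
  assumes "Rs \<noteq> []"
  shows "dominates_rep Rs v F \<longleftrightarrow>
    dominates_rep (take (length Rs - 1) Rs) v F \<or> dominates_in (Rs ! (length Rs - 1)) v F"
proof -
  have less_length: "i < length Rs \<longleftrightarrow> i < length Rs - 1 \<or> i = length Rs - 1" for i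
    using assms by (cases Rs) auto
  have "dominates_rep Rs v F \<longleftrightarrow> (\<exists>i<length Rs. dominates_in (Rs ! i) v F)"
    using dominates_rep_take_iff[of "length Rs" Rs] by simp
  also have "\<dots> \<longleftrightarrow>
      (\<exists>i<length Rs - 1. dominates_in (Rs ! i) v F) \<or> dominates_in (Rs ! (length Rs - 1)) v F"
    unfolding less_length by blast
  finally show ?thesis
    using dominates_rep_take_iff[of "length Rs - 1" Rs] by simp
qed

lemma supremum_section_subset: "F \<in> supremum_section V S \<Longrightarrow> G \<subseteq> F \<Longrightarrow> G \<in> supremum_section V S"
  unfolding supremum_section_def dominates_rep_def dominates_in_def by blast

definition psi_candidates :: "'a set \<Rightarrow> ('a \<times> 'a) set list \<Rightarrow> 'a set \<Rightarrow> 'a set" where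
  "psi_candidates V Rs F = {x \<in> V. \<forall>i < length Rs - 1. strict_in (Rs ! i) x (max_in (Rs ! i) F)}"

lemma psi_eq_min_in_psi_candidates:
  "psi V Rs F = min_in (Rs ! (length Rs - 1)) (psi_candidates V Rs F)"
  by (simp add: psi_def psi_candidates_def)

lemma psi_candidates_cong:
  "(\<And>i. i < length Rs - 1 \<Longrightarrow> max_in (Rs ! i) G = max_in (Rs ! i) F) \<Longrightarrow>
    psi_candidates V Rs G = psi_candidates V Rs F"
  by (simp add: psi_candidates_def)

locale finite_representation =
  fixes V :: "'a set" and Rs :: "('a \<times> 'a) set list"
  assumes finite_V: "finite V"
    and Rs_nonempty: "Rs \<noteq> []"
    and linear: "\<And>i. i < length Rs \<Longrightarrow> linear_order_on V (Rs ! i)"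
begin

abbreviation "Rs' \<equiv> take (length Rs - 1) Rs"
abbreviation "last_order \<equiv> Rs ! (length Rs - 1)"
abbreviation "\<Sigma> \<equiv> supremum_section V Rs"
abbreviation "\<Sigma>' \<equiv> supremum_section V Rs'"

lemma linear_last_order: "linear_order_on V last_order"
  using linear Rs_nonempty by simp

lemma nonempty_if_not_in_\<Sigma>':
  assumes "F \<notin> \<Sigma>'" "F \<subseteq> V" "1 < length Rs"
  shows "F \<noteq> {}"
proof
  assume "F = {}"
  then have "\<forall>v\<in>V. dominates_rep Rs' v F"
    using assms(3) by (auto simp: dominates_rep_take_iff dominates_in_def intro!: exI[of _ 0])
  then show False using assms(1,2) by (simp add: supremum_section_def)
qed

lemma psi_candidates_eq_not_dominating:
  assumes "F \<subseteq> V" "1 < length Rs \<Longrightarrow> F \<noteq> {}"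
  shows "psi_candidates V Rs F = {v \<in> V. \<not> dominates_rep Rs' v F}"
proof -
  have "\<not> dominates_in (Rs ! i) v F \<longleftrightarrow> strict_in (Rs ! i) v (max_in (Rs ! i) F)"
    if "v \<in> V" "i < length Rs - 1" for v i
    using that assms finite_subset[OF assms(1) finite_V] linear[of i]
    by (intro not_dominates_in_iff_strict_in_max_in) auto
  then show ?thesis by (auto simp: psi_candidates_def dominates_rep_take_iff)
qed

lemma not_in_\<Sigma>'_iff_psi_candidates_nonempty:
  assumes "F \<subseteq> V" "1 < length Rs \<Longrightarrow> F \<noteq> {}"
  shows "F \<notin> \<Sigma>' \<longleftrightarrow> psi_candidates V Rs F \<noteq> {}"
  using assms by (auto simp: psi_candidates_eq_not_dominating supremum_section_def)

lemma psi_candidate_dominates_last_order: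
  assumes "F \<in> \<Sigma> - \<Sigma>'" "x \<in> psi_candidates V Rs F"
  shows "dominates_in last_order x F"
proof -
  have "F \<subseteq> V" using assms(1) by (simp add: supremum_section_def)
  with assms have "x \<in> V" "\<not> dominates_rep Rs' x F" "dominates_rep Rs x F"
    using nonempty_if_not_in_\<Sigma>' psi_candidates_eq_not_dominating[of F]
    by (auto simp: supremum_section_def)
  then show ?thesis using dominates_rep_take_butlast[OF Rs_nonempty] by blast
qed

lemma psi_least_candidate:
  assumes "F \<in> \<Sigma> - \<Sigma>'"
  shows "psi V Rs F \<in> psi_candidates V Rs F"
    "\<forall>x\<in>psi_candidates V Rs F. (psi V Rs F, x) \<in> last_order"
proof -
  have "F \<subseteq> V" using assms by (simp add: supremum_section_def)
  then have "psi_candidates V Rs F \<noteq> {}"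
    using assms nonempty_if_not_in_\<Sigma>' not_in_\<Sigma>'_iff_psi_candidates_nonempty by blast
  moreover have "psi_candidates V Rs F \<subseteq> V" by (auto simp: psi_candidates_def)
  ultimately show "psi V Rs F \<in> psi_candidates V Rs F"
    "\<forall>x\<in>psi_candidates V Rs F. (psi V Rs F, x) \<in> last_order"
    unfolding psi_eq_min_in_psi_candidates
    using min_in_least[OF linear_last_order] finite_subset[OF _ finite_V] by blast+
qed

lemma max_in_initial_order:
  assumes "F \<in> \<Sigma> - \<Sigma>'" "i < length Rs - 1"
  shows "max_in (Rs ! i) F \<in> F" "\<forall>f\<in>F. (f, max_in (Rs ! i) F) \<in> Rs ! i"
    "strict_in (Rs ! i) (psi V Rs F) (max_in (Rs ! i) F)"
proof -
  have "F \<subseteq> V" using assms(1) by (simp add: supremum_section_def)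
  moreover have "F \<noteq> {}" using assms nonempty_if_not_in_\<Sigma>' calculation by auto
  ultimately show "max_in (Rs ! i) F \<in> F" "\<forall>f\<in>F. (f, max_in (Rs ! i) F) \<in> Rs ! i"
    using max_in_greatest[of V "Rs ! i" F] linear[of i] assms(2) finite_subset[OF _ finite_V]
    by auto
  show "strict_in (Rs ! i) (psi V Rs F) (max_in (Rs ! i) F)"
    using psi_least_candidate(1)[OF assms(1)] assms(2) by (simp add: psi_candidates_def)
qed

lemma psi_candidates_between:
  assumes "F \<in> \<Sigma> - \<Sigma>'" "F - {psi V Rs F} \<subseteq> G" "G \<subseteq> insert (psi V Rs F) F"
  shows "psi_candidates V Rs G = psi_candidates V Rs F"
proof (rule psi_candidates_cong)
  fix i assume i: "i < length Rs - 1"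
  have "linear_order_on V (Rs ! i)" using i linear by simp
  then show "max_in (Rs ! i) G = max_in (Rs ! i) F"
    using max_in_initial_order[OF assms(1) i] assms(2,3)
    by (intro max_in_eqI) (auto simp: strict_in_def)
qed

lemma insert_psi_in_\<Sigma>:
  assumes "F \<in> \<Sigma> - \<Sigma>'"
  shows "insert (psi V Rs F) F \<in> \<Sigma>"
  unfolding supremum_section_def
proof (intro CollectI conjI ballI)
  have FV: "F \<subseteq> V" using assms by (simp add: supremum_section_def)
  then show "insert (psi V Rs F) F \<subseteq> V"
    using psi_least_candidate(1)[OF assms] by (auto simp: psi_candidates_def)
  fix v assume v: "v \<in> V"
  show "dominates_rep Rs v (insert (psi V Rs F) F)"
  proof (cases "v \<in> psi_candidates V Rs F")
    case True
    then have "dominates_in last_order v (insert (psi V Rs F) F)"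
      using psi_candidate_dominates_last_order[OF assms] psi_least_candidate(2)[OF assms]
      by (simp add: dominates_in_def)
    then show ?thesis using dominates_rep_take_butlast[OF Rs_nonempty] by blast
  next
    case False
    then have "dominates_rep Rs' v F"
      using v FV assms nonempty_if_not_in_\<Sigma>' psi_candidates_eq_not_dominating[of F] by blast
    then obtain i where i: "i < length Rs - 1" "dominates_in (Rs ! i) v F"
      by (auto simp: dominates_rep_take_iff)
    note max = max_in_initial_order[OF assms i(1)]
    have "(max_in (Rs ! i) F, v) \<in> Rs ! i" using i(2) max(1) by (simp add: dominates_in_def)
    then have "dominates_in (Rs ! i) v (insert (psi V Rs F) F)"
      using i(2) max(3) linear_order_on_trans[OF linear[of i]] i(1)
      by (auto simp: dominates_in_def strict_in_def)
    then show ?thesis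
      using i(1) dominates_rep_take_butlast[OF Rs_nonempty] by (auto simp: dominates_rep_take_iff)
  qed
qed

lemma psi_between_in_\<Sigma>_minus_\<Sigma>':
  assumes "F \<in> \<Sigma> - \<Sigma>'" "F - {psi V Rs F} \<subseteq> G" "G \<subseteq> insert (psi V Rs F) F"
  shows "G \<in> \<Sigma> - \<Sigma>'" "psi V Rs G = psi V Rs F"
proof -
  have GV: "G \<subseteq> V"
    using assms(3) insert_psi_in_\<Sigma>[OF assms(1)] by (auto simp: supremum_section_def)
  have "G \<noteq> {}" if "1 < length Rs"
    using max_in_initial_order[OF assms(1), of 0] assms(2) that by (auto simp: strict_in_def)
  then have "G \<notin> \<Sigma>'"
    using psi_least_candidate(1)[OF assms(1)] not_in_\<Sigma>'_iff_psi_candidates_nonempty[OF GV]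
      psi_candidates_between[OF assms] by auto
  then show "G \<in> \<Sigma> - \<Sigma>'"
    using supremum_section_subset[OF insert_psi_in_\<Sigma>[OF assms(1)] assms(3)] by blast
  show "psi V Rs G = psi V Rs F"
    using psi_candidates_between[OF assms] by (simp add: psi_eq_min_in_psi_candidates)
qed

lemma strict_in_last_order_psi:
  assumes "F \<in> \<Sigma> - \<Sigma>'" "psi V Rs F \<notin> F" "f \<in> F"
  shows "strict_in last_order f (psi V Rs F)"
  using psi_candidate_dominates_last_order[OF assms(1) psi_least_candidate(1)[OF assms(1)]] assms(2,3)
  by (auto simp: dominates_in_def strict_in_def)

end

theorem lemma3:
  fixes V :: "'a set" and Rs :: "('a \<times> 'a) set list" and d :: nat
  assumes "finite V"
    and "d \<ge> 1" and "length Rs = d"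
    and "\<forall>i < d. linear_order_on V (Rs ! i)"
  defines "R' \<equiv> take (d - 1) Rs"
  defines "A \<equiv> {F \<in> supremum_section V Rs - supremum_section V R'. psi V Rs F \<notin> F}"
  defines "B \<equiv> {F \<in> supremum_section V Rs - supremum_section V R'. psi V Rs F \<in> F}"
  shows "(\<forall>F\<in>A. F \<union> {psi V Rs F} \<in> B
              \<and> psi V Rs (F \<union> {psi V Rs F}) = psi V Rs F
              \<and> (\<forall>f\<in>F. strict_in (Rs ! (d - 1)) f (psi V Rs F)))
       \<and> (\<forall>F\<in>B. F - {psi V Rs F} \<in> A
              \<and> psi V Rs (F - {psi V Rs F}) = psi V Rs F)"
proof -
  interpret finite_representation V Rs
    using assms(1-4) by unfold_locales auto
  have sections: "supremum_section V Rs - supremum_section V R' = \<Sigma> - \<Sigma>'"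
    using assms(3) by (simp add: R'_def)
  have "F \<union> {psi V Rs F} \<in> B \<and> psi V Rs (F \<union> {psi V Rs F}) = psi V Rs F
      \<and> (\<forall>f\<in>F. strict_in (Rs ! (d - 1)) f (psi V Rs F))" if "F \<in> A" for F
  proof -
    from that have F: "F \<in> \<Sigma> - \<Sigma>'" "psi V Rs F \<notin> F"
      by (simp_all add: A_def sections)
    have "F - {psi V Rs F} \<subseteq> insert (psi V Rs F) F" by blast
    note insert = psi_between_in_\<Sigma>_minus_\<Sigma>'[OF F(1) this order_refl]
    have "\<forall>f\<in>F. strict_in (Rs ! (d - 1)) f (psi V Rs F)"
      using strict_in_last_order_psi[OF F] assms(3) by simp
    with insert show ?thesis by (simp add: B_def sections)
  qed
  moreover have "F - {psi V Rs F} \<in> A \<and> psi V Rs (F - {psi V Rs F}) = psi V Rs F"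
    if "F \<in> B" for F
  proof -
    from that have F: "F \<in> \<Sigma> - \<Sigma>'"
      by (simp add: B_def sections)
    have "F - {psi V Rs F} \<subseteq> insert (psi V Rs F) F" by blast
    from psi_between_in_\<Sigma>_minus_\<Sigma>'[OF F order_refl this] show ?thesis
      by (simp add: A_def sections)
  qed
  ultimately show ?thesis by blast
qed

end
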